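(* Let $\mathcal V\subseteq B(H)$ be an operator system and let $p\in\mathcal V$ be a projection in $B(H)$. Let $J_p=\operatorname{span}(C(p)\cap-C(p))$ and $J_{p_n}=\operatorname{span}(C(p_n)\cap-C(p_n))$. Then $M_n(J_p)=J_{p_n}$ for every $n\in\mathbb N$.
   Context: $p_n=I_n\otimes p$ and $C(p_n)=\{x\in M_n(\mathcal V): x=x^*,\ p_nxp_n\ge0\text{ in }B(H^n)\}$. *)

theory Defs
  imports "HOL-Analysis.Analysis" "HOL-Library.Function_Algebras"
begin

class complex_vector = real_vector +
  fixes scaleC :: "complex \<Rightarrow> 'a \<Rightarrow> 'a" (infixr "*\<^sub>C" 75)
  assumes scaleR_scaleC: "scaleR r = scaleC (complex_of_real r)"
  assumes scaleC_add_right: "a *\<^sub>C (x + y) = a *\<^sub>C x + a *\<^sub>C y"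
  assumes scaleC_add_left: "(a + b) *\<^sub>C x = a *\<^sub>C x + b *\<^sub>C x"
  assumes scaleC_scaleC: "a *\<^sub>C (b *\<^sub>C x) = (a * b) *\<^sub>C x"
  assumes scaleC_one: "1 *\<^sub>C x = x"

class complex_inner = complex_vector + real_inner +
  fixes cinner :: "'a \<Rightarrow> 'a \<Rightarrow> complex"
  assumes cinner_commute: "cinner x y = cnj (cinner y x)"
  assumes cinner_add_right: "cinner x (y + z) = cinner x y + cinner x z"
  assumes cinner_scaleC_right: "cinner x (r *\<^sub>C y) = r * cinner x y"
  assumes cinner_re: "inner x y = Re (cinner x y)"

class chilbert_space = complex_inner + complete_space

definition bounded_clinear :: "('a::complex_inner \<Rightarrow> 'b::complex_inner) \<Rightarrow> bool" where
  "bounded_clinear T \<longleftrightarrow> bounded_linear T \<and> (\<forall>c x. T (c *\<^sub>C x) = c *\<^sub>C T x)"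

definition BH :: "('h::chilbert_space \<Rightarrow> 'h) set" where
  "BH = {T. bounded_clinear T}"

definition is_adjoint :: "('h::complex_inner \<Rightarrow> 'h) \<Rightarrow> ('h \<Rightarrow> 'h) \<Rightarrow> bool" where
  "is_adjoint T S \<longleftrightarrow> (\<forall>x y. cinner (T x) y = cinner x (S y))"

definition selfadjoint :: "('h::complex_inner \<Rightarrow> 'h) \<Rightarrow> bool" where
  "selfadjoint T \<longleftrightarrow> is_adjoint T T"

definition positive_op :: "('h::complex_inner \<Rightarrow> 'h) \<Rightarrow> bool" where
  "positive_op T \<longleftrightarrow> (\<forall>h. Im (cinner h (T h)) = 0 \<and> Re (cinner h (T h)) \<ge> 0)"

definition projection :: "('h::chilbert_space \<Rightarrow> 'h) \<Rightarrow> bool" where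
  "projection p \<longleftrightarrow> p \<in> BH \<and> p \<circ> p = p \<and> selfadjoint p"

definition operator_system :: "('h::chilbert_space \<Rightarrow> 'h) set \<Rightarrow> bool" where
  "operator_system V \<longleftrightarrow> V \<subseteq> BH \<and> id \<in> V \<and> 0 \<in> V
     \<and> (\<forall>x\<in>V. \<forall>y\<in>V. x + y \<in> V)
     \<and> (\<forall>c. \<forall>x\<in>V. (\<lambda>h. c *\<^sub>C x h) \<in> V)
     \<and> (\<forall>x\<in>V. \<exists>y\<in>V. is_adjoint x y)"

definition gspan :: "(complex \<Rightarrow> 'v \<Rightarrow> 'v) \<Rightarrow> 'v::comm_monoid_add set \<Rightarrow> 'v set" where
  "gspan sc S = {y. \<exists>F c. finite F \<and> F \<subseteq> S \<and> y = (\<Sum>x\<in>F. sc (c x) x)}"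

definition op_scale :: "complex \<Rightarrow> ('h::complex_vector \<Rightarrow> 'h) \<Rightarrow> ('h \<Rightarrow> 'h)" where
  "op_scale c x = (\<lambda>h. c *\<^sub>C x h)"

definition mat_scale :: "complex \<Rightarrow> ('n \<Rightarrow> 'n \<Rightarrow> 'h::complex_vector \<Rightarrow> 'h) \<Rightarrow> ('n \<Rightarrow> 'n \<Rightarrow> 'h \<Rightarrow> 'h)" where
  "mat_scale c X = (\<lambda>i j h. c *\<^sub>C X i j h)"

definition Cp :: "('h::chilbert_space \<Rightarrow> 'h) set \<Rightarrow> ('h \<Rightarrow> 'h) \<Rightarrow> ('h \<Rightarrow> 'h) set" where
  "Cp V p = {x \<in> V. selfadjoint x \<and> positive_op (p \<circ> x \<circ> p)}"

definition Jp :: "('h::chilbert_space \<Rightarrow> 'h) set \<Rightarrow> ('h \<Rightarrow> 'h) \<Rightarrow> ('h \<Rightarrow> 'h) set" where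
  "Jp V p = gspan op_scale (Cp V p \<inter> uminus ` Cp V p)"

section \<open>Matrices over V, indexed by a finite type 'n (so n = CARD('n))\<close>

definition Mn :: "('h \<Rightarrow> 'h) set \<Rightarrow> ('n::finite \<Rightarrow> 'n \<Rightarrow> 'h \<Rightarrow> 'h) set" where
  "Mn S = {X. \<forall>i j. X i j \<in> S}"

definition mat_apply :: "('n::finite \<Rightarrow> 'n \<Rightarrow> 'h \<Rightarrow> 'h::complex_vector) \<Rightarrow> ('n \<Rightarrow> 'h) \<Rightarrow> ('n \<Rightarrow> 'h)" where
  "mat_apply X \<xi> = (\<lambda>i. \<Sum>j\<in>UNIV. X i j (\<xi> j))"

definition mat_mult :: "('n::finite \<Rightarrow> 'n \<Rightarrow> 'h \<Rightarrow> 'h::complex_vector) \<Rightarrow> ('n \<Rightarrow> 'n \<Rightarrow> 'h \<Rightarrow> 'h) \<Rightarrow> ('n \<Rightarrow> 'n \<Rightarrow> 'h \<Rightarrow> 'h)" where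
  "mat_mult A B = (\<lambda>i j. \<Sum>k\<in>UNIV. A i k \<circ> B k j)"

definition hn_inner :: "('n::finite \<Rightarrow> 'h::complex_inner) \<Rightarrow> ('n \<Rightarrow> 'h) \<Rightarrow> complex" where
  "hn_inner \<xi> \<eta> = (\<Sum>i\<in>UNIV. cinner (\<xi> i) (\<eta> i))"

definition positive_mat :: "('n::finite \<Rightarrow> 'n \<Rightarrow> 'h \<Rightarrow> 'h::complex_inner) \<Rightarrow> bool" where
  "positive_mat X \<longleftrightarrow> (\<forall>\<xi>. Im (hn_inner \<xi> (mat_apply X \<xi>)) = 0 \<and> Re (hn_inner \<xi> (mat_apply X \<xi>)) \<ge> 0)"

text \<open>Self-adjointness in M_n(B(H)) = B(H^n): (X*)_{ij} = (X_{ji})*.\<close>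
definition selfadjoint_mat :: "('n::finite \<Rightarrow> 'n \<Rightarrow> 'h \<Rightarrow> 'h::complex_inner) \<Rightarrow> bool" where
  "selfadjoint_mat X \<longleftrightarrow> (\<forall>i j. is_adjoint (X i j) (X j i))"

definition pn :: "('h \<Rightarrow> 'h::complex_vector) \<Rightarrow> ('n::finite \<Rightarrow> 'n \<Rightarrow> 'h \<Rightarrow> 'h)" where
  "pn p = (\<lambda>i j. if i = j then p else 0)"

definition Cpn :: "('h::chilbert_space \<Rightarrow> 'h) set \<Rightarrow> ('h \<Rightarrow> 'h) \<Rightarrow> ('n::finite \<Rightarrow> 'n \<Rightarrow> 'h \<Rightarrow> 'h) set" where
  "Cpn V p = {X \<in> Mn V. selfadjoint_mat X \<and> positive_mat (mat_mult (mat_mult (pn p) X) (pn p))}"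

definition Jpn :: "('h::chilbert_space \<Rightarrow> 'h) set \<Rightarrow> ('h \<Rightarrow> 'h) \<Rightarrow> ('n::finite \<Rightarrow> 'n \<Rightarrow> 'h \<Rightarrow> 'h) set" where
  "Jpn V p = gspan mat_scale (Cpn V p \<inter> uminus ` Cpn V p)"

end

theory Submission imports Defs begin

text \<open>If \<open>x\<close> and \<open>-x\<close> both lie in \<open>C(p)\<close>, the quadratic form of \<open>pxp\<close> vanishes,
  so \<open>pxp = 0\<close> by polarization. Hence \<open>C(p) \<inter> -C(p)\<close> consists of the self-adjoint elements of
  \<open>K = {x \<in> V. pxp = 0}\<close>. The subspace \<open>K\<close> is closed under adjoints, so every element of it is
  \<open>a + \<i> b\<close> with \<open>a, b\<close> self-adjoint in \<open>K\<close>, and \<open>J\<^sub>p = K\<close>. The same argument on \<open>H\<^sup>n\<close>, where the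
  entries of \<open>p\<^sub>n X p\<^sub>n\<close> are the \<open>p X\<^sub>i\<^sub>j p\<close>, gives \<open>J\<^sub>p\<^sub>n = M\<^sub>n(K)\<close>.\<close>

lemma scaleC_zero_right [simp]: "c *\<^sub>C (0::'a::complex_vector) = 0"
proof -
  have "c *\<^sub>C (0::'a) = c *\<^sub>C 0 + c *\<^sub>C 0" by (metis add_0 scaleC_add_right)
  then show ?thesis by simp
qed

lemma scaleC_zero_left [simp]: "0 *\<^sub>C (x::'a::complex_vector) = 0"
  by (metis scaleR_scaleC scaleR_zero_left of_real_0)

lemma scaleC_minus1_left: "(-1) *\<^sub>C (x::'a::complex_vector) = - x"
  by (metis scaleR_scaleC scaleR_minus1_left of_real_1 of_real_minus)

lemma cinner_zero_right [simp]: "cinner x (0::'a::complex_inner) = 0"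
proof -
  have "cinner x (0::'a) = cinner x 0 + cinner x 0" by (metis add_0 cinner_add_right)
  then show ?thesis by simp
qed

lemma cinner_zero_left [simp]: "cinner (0::'a::complex_inner) x = 0"
  by (metis cinner_commute cinner_zero_right complex_cnj_zero)

lemma cinner_add_left: "cinner (x + y) (z::'a::complex_inner) = cinner x z + cinner y z"
  by (metis cinner_commute cinner_add_right complex_cnj_add)

lemma cinner_scaleC_left: "cinner (c *\<^sub>C x) (y::'a::complex_inner) = cnj c * cinner x y"
  by (metis cinner_commute cinner_scaleC_right complex_cnj_mult)

lemma cinner_minus_right: "cinner x (- y::'a::complex_inner) = - cinner x y"
  by (metis scaleC_minus1_left cinner_scaleC_right mult_minus1)

lemma cinner_minus_left: "cinner (- x) (y::'a::complex_inner) = - cinner x y"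
  by (metis cinner_commute cinner_minus_right complex_cnj_minus)

lemma cinner_sum_right: "finite A \<Longrightarrow> cinner x (\<Sum>a\<in>A. f a) = (\<Sum>a\<in>A. cinner x (f a))"
  by (induction A rule: finite_induct) (auto simp: cinner_add_right)

lemma cinner_right_eq_zero_imp_zero: "(\<And>h. cinner h (x::'a::complex_inner) = 0) \<Longrightarrow> x = 0"
  by (metis cinner_re inner_eq_zero_iff zero_complex.simps(1))

lemma bounded_clinear_add: "bounded_clinear T \<Longrightarrow> T (x + y) = T x + T y"
  unfolding bounded_clinear_def by (simp add: linear_simps)

lemma bounded_clinear_zero: "bounded_clinear T \<Longrightarrow> T 0 = 0"
  unfolding bounded_clinear_def by (simp add: linear_simps)

lemma bounded_clinear_minus: "bounded_clinear T \<Longrightarrow> T (- x) = - T x"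
  unfolding bounded_clinear_def by (simp add: linear_simps)

lemma bounded_clinear_scaleC: "bounded_clinear T \<Longrightarrow> T (c *\<^sub>C x) = c *\<^sub>C T x"
  unfolding bounded_clinear_def by simp

lemma is_adjoint_sym: "is_adjoint T S \<Longrightarrow> is_adjoint S T"
  unfolding is_adjoint_def by (metis cinner_commute)

lemma operator_system_bounded_clinear: "operator_system V \<Longrightarrow> x \<in> V \<Longrightarrow> bounded_clinear x"
  unfolding operator_system_def BH_def by blast

lemma operator_system_uminus:
  assumes "operator_system V" "x \<in> V"
  shows "- x \<in> V"
proof -
  have "(\<lambda>h. (-1) *\<^sub>C x h) \<in> V" using assms unfolding operator_system_def by blast
  moreover have "(\<lambda>h. (-1) *\<^sub>C x h) = - x" by (simp add: fun_eq_iff scaleC_minus1_left)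
  ultimately show ?thesis by simp
qed

lemma bounded_clinear_comp:
  "bounded_clinear S \<Longrightarrow> bounded_clinear T \<Longrightarrow> bounded_clinear (S \<circ> T)"
  unfolding bounded_clinear_def comp_def using bounded_linear_compose[of S T] by simp

lemma uminus_image_iff: "(x::'a::group_add) \<in> uminus ` A \<longleftrightarrow> - x \<in> A"
  by (auto intro: image_eqI[of _ _ "- x"])

lemma sesquilinear_eq_zero_if_diagonal_zero:
  fixes B :: "'a::plus \<Rightarrow> 'a \<Rightarrow> complex" and sc :: "complex \<Rightarrow> 'a \<Rightarrow> 'a"
  assumes add_left: "\<And>x y z. B (x + y) z = B x z + B y z"
    and add_right: "\<And>x y z. B z (x + y) = B z x + B z y"
    and scale_left: "\<And>c x y. B (sc c x) y = cnj c * B x y"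
    and scale_right: "\<And>c x y. B x (sc c y) = c * B x y"
    and diag: "\<And>x. B x x = 0"
  shows "B x y = 0"
proof -
  have "B (x + y) (x + y) = B x x + B y x + (B x y + B y y)"
    by (simp add: add_left add_right)
  then have skew: "B x y + B y x = 0" by (simp add: diag add.commute)
  have "B (x + sc \<i> y) (x + sc \<i> y) = B x x + \<i> * B x y + cnj \<i> * B y x + B y y"
    by (simp add: add_left add_right scale_left scale_right algebra_simps)
  then have "\<i> * (B x y - B y x) = 0" by (simp add: diag algebra_simps)
  then have "B x y = B y x" by simp
  with skew show ?thesis by simp
qed

lemma positive_op_antisym:
  assumes T: "bounded_clinear T" and "positive_op T" and "positive_op (- T)"
  shows "T = 0"
proof -
  have diag: "cinner h (T h) = 0" for h
  proof -
    have "Im (cinner h (T h)) = 0" "Re (cinner h (T h)) \<ge> 0" "Re (- cinner h (T h)) \<ge> 0"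
      using assms(2,3) unfolding positive_op_def by (auto simp: cinner_minus_right)
    then show ?thesis by (simp add: complex_eq_iff)
  qed
  have "cinner h (T k) = 0" for h k
    by (rule sesquilinear_eq_zero_if_diagonal_zero[where B = "\<lambda>h k. cinner h (T k)" and sc = scaleC])
       (simp_all add: diag cinner_add_left cinner_add_right cinner_scaleC_left cinner_scaleC_right
          bounded_clinear_add[OF T] bounded_clinear_scaleC[OF T])
  then have "T k = 0" for k by (rule cinner_right_eq_zero_imp_zero)
  then show ?thesis by (simp add: fun_eq_iff)
qed

lemma hn_inner_mat_apply:
  "hn_inner \<xi> (mat_apply M \<eta>) = (\<Sum>i\<in>UNIV. \<Sum>j\<in>UNIV. cinner (\<xi> i) (M i j (\<eta> j)))"
  unfolding hn_inner_def mat_apply_def by (simp add: cinner_sum_right)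

lemma positive_mat_antisym:
  fixes M :: "'n::finite \<Rightarrow> 'n \<Rightarrow> 'h::complex_inner \<Rightarrow> 'h"
  assumes M: "\<And>i j. bounded_clinear (M i j)" and "positive_mat M" and "positive_mat (- M)"
  shows "M = 0"
proof -
  define B where "B \<xi> \<eta> = hn_inner \<xi> (mat_apply M \<eta>)" for \<xi> \<eta> :: "'n \<Rightarrow> 'h"
  have diag: "B \<xi> \<xi> = 0" for \<xi>
  proof -
    have "hn_inner \<xi> (mat_apply (- M) \<xi>) = - B \<xi> \<xi>"
      unfolding B_def hn_inner_mat_apply by (simp add: cinner_minus_right sum_negf)
    then have "Im (B \<xi> \<xi>) = 0" "Re (B \<xi> \<xi>) \<ge> 0" "Re (- B \<xi> \<xi>) \<ge> 0"
      using assms(2,3) unfolding positive_mat_def B_def by metis+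
    then show ?thesis by (simp add: complex_eq_iff)
  qed
  have form: "B \<xi> \<eta> = 0" for \<xi> \<eta>
    by (rule sesquilinear_eq_zero_if_diagonal_zero[where B = B and sc = "\<lambda>c \<xi> i. c *\<^sub>C \<xi> i"])
       (simp_all add: diag B_def hn_inner_mat_apply cinner_add_left cinner_add_right
          cinner_scaleC_left cinner_scaleC_right bounded_clinear_add[OF M] bounded_clinear_scaleC[OF M]
          sum.distrib sum_distrib_left)
  have "cinner h (M i j k) = 0" for i j h k
  proof -
    have "cinner (if l = i then h else 0) (M l m (if m = j then k else 0))
        = (if m = j then if l = i then cinner h (M i j k) else 0 else 0)" for l m
      by (simp add: bounded_clinear_zero[OF M])
    then have "B (\<lambda>l. if l = i then h else 0) (\<lambda>m. if m = j then k else 0) = cinner h (M i j k)"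
      unfolding B_def hn_inner_mat_apply by simp
    with form show ?thesis by simp
  qed
  then have "M i j k = 0" for i j k by (rule cinner_right_eq_zero_imp_zero)
  then show ?thesis by (simp add: fun_eq_iff)
qed

lemma positive_op_zero: "positive_op 0"
  unfolding positive_op_def by simp

lemma positive_mat_zero: "positive_mat (\<lambda>(i::'n::finite) (j::'n). 0 :: 'h::complex_inner \<Rightarrow> 'h)"
  unfolding positive_mat_def hn_inner_mat_apply by simp

lemma selfadjoint_uminus_iff: "selfadjoint (- x) \<longleftrightarrow> selfadjoint x"
  unfolding selfadjoint_def is_adjoint_def by (simp add: cinner_minus_left cinner_minus_right)

lemma selfadjoint_mat_uminus_iff: "selfadjoint_mat (- X) \<longleftrightarrow> selfadjoint_mat X"
  unfolding selfadjoint_mat_def is_adjoint_def by (simp add: cinner_minus_left cinner_minus_right)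

lemma compression_uminus: "bounded_clinear p \<Longrightarrow> p \<circ> (- x) \<circ> p = - (p \<circ> x \<circ> p)"
  by (simp add: fun_eq_iff bounded_clinear_minus)

lemma pn_compression:
  assumes "p 0 = 0" and "\<And>i j. X i j 0 = 0"
  shows "mat_mult (mat_mult (pn p) X) (pn p) = (\<lambda>i j. p \<circ> X i j \<circ> p)"
proof -
  have left: "mat_mult (pn p) X = (\<lambda>i j. p \<circ> X i j)"
  proof (intro ext)
    fix i j h
    have "mat_mult (pn p) X i j = (\<Sum>k\<in>UNIV. if k = i then p \<circ> X k j else 0)"
      unfolding mat_mult_def pn_def by (rule sum.cong) (auto simp: fun_eq_iff)
    then show "mat_mult (pn p) X i j h = (p \<circ> X i j) h" by simp
  qed
  show ?thesis
  proof (intro ext)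
    fix i j h
    have "mat_mult (\<lambda>i j. p \<circ> X i j) (pn p) i j = (\<Sum>k\<in>UNIV. if k = j then p \<circ> X i k \<circ> p else 0)"
      unfolding mat_mult_def pn_def by (rule sum.cong) (auto simp: fun_eq_iff assms)
    then show "mat_mult (mat_mult (pn p) X) (pn p) i j h = (p \<circ> X i j \<circ> p) h"
      by (simp add: left)
  qed
qed

definition compression_kernel :: "('h::chilbert_space \<Rightarrow> 'h) set \<Rightarrow> ('h \<Rightarrow> 'h) \<Rightarrow> ('h \<Rightarrow> 'h) set" where
  "compression_kernel V p = {x \<in> V. p \<circ> x \<circ> p = 0}"

lemma compression_kernel_zero:
  assumes "operator_system V" "bounded_clinear p"
  shows "0 \<in> compression_kernel V p"
  using assms unfolding compression_kernel_def operator_system_def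
  by (simp add: fun_eq_iff bounded_clinear_zero[OF assms(2)])

lemma compression_kernel_add:
  assumes "operator_system V" "bounded_clinear p"
    and "x \<in> compression_kernel V p" "y \<in> compression_kernel V p"
  shows "x + y \<in> compression_kernel V p"
proof -
  have "x + y \<in> V" using assms unfolding operator_system_def compression_kernel_def by blast
  moreover have "p \<circ> (x + y) \<circ> p = (p \<circ> x \<circ> p) + (p \<circ> y \<circ> p)"
    by (simp add: fun_eq_iff bounded_clinear_add[OF assms(2)])
  ultimately show ?thesis using assms(3,4) unfolding compression_kernel_def by simp
qed

lemma compression_kernel_scale:
  assumes "operator_system V" "bounded_clinear p" "x \<in> compression_kernel V p"
  shows "op_scale c x \<in> compression_kernel V p"
proof -
  have "op_scale c x \<in> V"
    using assms unfolding operator_system_def compression_kernel_def op_scale_def by blast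
  have "p \<circ> op_scale c x \<circ> p = op_scale c (p \<circ> x \<circ> p)"
    by (simp add: fun_eq_iff op_scale_def bounded_clinear_scaleC[OF assms(2)])
  also have "\<dots> = 0"
    using assms(3) unfolding compression_kernel_def op_scale_def by (simp add: fun_eq_iff)
  finally have "p \<circ> op_scale c x \<circ> p = 0" .
  with \<open>op_scale c x \<in> V\<close> show ?thesis unfolding compression_kernel_def by simp
qed

lemma compression_kernel_adjoint:
  assumes "selfadjoint p" and x: "x \<in> compression_kernel V p" and "y \<in> V" and xy: "is_adjoint x y"
  shows "y \<in> compression_kernel V p"
proof -
  have p_sym: "cinner (p h) k = cinner h (p k)" for h k
    using \<open>selfadjoint p\<close> unfolding selfadjoint_def is_adjoint_def by blast
  have px: "p (x (p h)) = 0" for h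
    using x unfolding compression_kernel_def by (simp add: fun_eq_iff)
  have "cinner h (p (y (p k))) = 0" for h k
  proof -
    have "cinner h (p (y (p k))) = cinner (p h) (y (p k))" by (simp add: p_sym)
    also have "\<dots> = cinner (x (p h)) (p k)" using xy unfolding is_adjoint_def by simp
    also have "\<dots> = cinner (p (x (p h))) k" by (simp add: p_sym)
    also have "\<dots> = 0" by (simp add: px)
    finally show ?thesis .
  qed
  then have "p (y (p k)) = 0" for k by (rule cinner_right_eq_zero_imp_zero)
  then have "p \<circ> y \<circ> p = 0" by (simp add: fun_eq_iff)
  with \<open>y \<in> V\<close> show ?thesis unfolding compression_kernel_def by simp
qed

lemma Cp_Int_uminus_Cp:
  assumes V: "operator_system V" and p: "bounded_clinear p"
  shows "Cp V p \<inter> uminus ` Cp V p = {x \<in> compression_kernel V p. selfadjoint x}"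
proof -
  have "x \<in> Cp V p \<and> - x \<in> Cp V p \<longleftrightarrow> x \<in> compression_kernel V p \<and> selfadjoint x" for x
  proof
    assume x: "x \<in> Cp V p \<and> - x \<in> Cp V p"
    then have "x \<in> V" "selfadjoint x" unfolding Cp_def by auto
    have "bounded_clinear (p \<circ> x \<circ> p)"
      using p operator_system_bounded_clinear[OF V \<open>x \<in> V\<close>] by (simp add: bounded_clinear_comp)
    moreover have "positive_op (p \<circ> x \<circ> p)" "positive_op (- (p \<circ> x \<circ> p))"
      using x unfolding Cp_def by (auto simp: compression_uminus[OF p])
    ultimately have "p \<circ> x \<circ> p = 0" by (rule positive_op_antisym)
    with \<open>x \<in> V\<close> \<open>selfadjoint x\<close> show "x \<in> compression_kernel V p \<and> selfadjoint x"
      unfolding compression_kernel_def by simp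
  next
    assume "x \<in> compression_kernel V p \<and> selfadjoint x"
    then show "x \<in> Cp V p \<and> - x \<in> Cp V p"
      unfolding compression_kernel_def Cp_def
      by (simp add: operator_system_uminus[OF V] selfadjoint_uminus_iff compression_uminus[OF p]
          positive_op_zero)
  qed
  then show ?thesis unfolding set_eq_iff Int_iff uminus_image_iff mem_Collect_eq by blast
qed

lemma Cpn_entrywise:
  assumes V: "operator_system V" and p: "bounded_clinear p"
  shows "(Cpn V p :: ('n::finite \<Rightarrow> 'n \<Rightarrow> 'h::chilbert_space \<Rightarrow> 'h) set)
    = {X \<in> Mn V. selfadjoint_mat X \<and> positive_mat (\<lambda>i j. p \<circ> X i j \<circ> p)}"
proof -
  have "mat_mult (mat_mult (pn p) X) (pn p) = (\<lambda>i j. p \<circ> X i j \<circ> p)"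
    if "X \<in> Mn V" for X :: "'n \<Rightarrow> 'n \<Rightarrow> 'h \<Rightarrow> 'h"
  proof (rule pn_compression)
    show "p 0 = 0" using p by (rule bounded_clinear_zero)
    show "X i j 0 = 0" for i j
      using that V by (simp add: Mn_def bounded_clinear_zero operator_system_bounded_clinear)
  qed
  then show ?thesis unfolding Cpn_def by (simp cong: conj_cong)
qed

lemma Cpn_Int_uminus_Cpn:
  assumes V: "operator_system V" and p: "bounded_clinear p"
  shows "Cpn V p \<inter> uminus ` Cpn V p
    = {X :: 'n::finite \<Rightarrow> 'n \<Rightarrow> 'h::chilbert_space \<Rightarrow> 'h. X \<in> Mn (compression_kernel V p) \<and> selfadjoint_mat X}"
proof -
  have "X \<in> Cpn V p \<and> - X \<in> Cpn V p \<longleftrightarrow> X \<in> Mn (compression_kernel V p) \<and> selfadjoint_mat X"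
    for X :: "'n \<Rightarrow> 'n \<Rightarrow> 'h \<Rightarrow> 'h"
  proof
    let ?M = "\<lambda>i j. p \<circ> X i j \<circ> p"
    assume X: "X \<in> Cpn V p \<and> - X \<in> Cpn V p"
    then have "X \<in> Mn V" "selfadjoint_mat X" unfolding Cpn_entrywise[OF V p] by auto
    have M: "bounded_clinear (?M i j)" for i j
      using \<open>X \<in> Mn V\<close> p operator_system_bounded_clinear[OF V]
      by (simp add: Mn_def bounded_clinear_comp)
    have "(\<lambda>i j. p \<circ> (- X) i j \<circ> p) = - ?M"
      by (simp add: fun_eq_iff bounded_clinear_minus[OF p])
    with X have "positive_mat ?M" "positive_mat (- ?M)" unfolding Cpn_entrywise[OF V p] by auto
    with M have "?M = 0" by (rule positive_mat_antisym)
    then have "p \<circ> X i j \<circ> p = 0" for i j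
      using fun_cong[OF fun_cong[OF \<open>?M = 0\<close>, of i], of j] by simp
    with \<open>X \<in> Mn V\<close> \<open>selfadjoint_mat X\<close>
    show "X \<in> Mn (compression_kernel V p) \<and> selfadjoint_mat X"
      unfolding Mn_def compression_kernel_def by simp
  next
    assume "X \<in> Mn (compression_kernel V p) \<and> selfadjoint_mat X"
    then show "X \<in> Cpn V p \<and> - X \<in> Cpn V p"
      unfolding Cpn_entrywise[OF V p] Mn_def compression_kernel_def
      by (simp add: operator_system_uminus[OF V] selfadjoint_mat_uminus_iff compression_uminus[OF p]
          positive_mat_zero)
  qed
  then show ?thesis unfolding set_eq_iff Int_iff uminus_image_iff mem_Collect_eq by blast
qed

text \<open>For \<open>y = x\<^sup>*\<close> this is \<open>c x + (c x)\<^sup>*\<close>; \<open>c = 1/2\<close> and \<open>c = -\<i>/2\<close> give the real and imaginary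
  parts of \<open>x\<close>.\<close>
definition herm_combo :: "complex \<Rightarrow> ('h::complex_vector \<Rightarrow> 'h) \<Rightarrow> ('h \<Rightarrow> 'h) \<Rightarrow> 'h \<Rightarrow> 'h" where
  "herm_combo c x y = (\<lambda>h. c *\<^sub>C x h + cnj c *\<^sub>C y h)"

lemma is_adjoint_herm_combo:
  "is_adjoint x x' \<Longrightarrow> is_adjoint y y' \<Longrightarrow> is_adjoint (herm_combo c x y) (herm_combo c y' x')"
  unfolding is_adjoint_def herm_combo_def
  by (simp add: cinner_add_left cinner_add_right cinner_scaleC_left cinner_scaleC_right add.commute)

lemma herm_combo_cartesian:
  "op_scale 1 (herm_combo (1/2) x y) + op_scale \<i> (herm_combo (-\<i>/2) x y) = x"
proof (rule ext)
  fix h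
  have "(op_scale 1 (herm_combo (1/2) x y) + op_scale \<i> (herm_combo (-\<i>/2) x y)) h
      = (1/2) *\<^sub>C x h + (1/2) *\<^sub>C y h + ((1/2) *\<^sub>C x h + (-1/2) *\<^sub>C y h)"
    by (simp add: op_scale_def herm_combo_def scaleC_add_right scaleC_scaleC scaleC_one)
  also have "\<dots> = (1/2 + 1/2) *\<^sub>C x h + (1/2 + -1/2) *\<^sub>C y h"
    by (simp only: scaleC_add_left add.assoc add.left_commute)
  finally show "(op_scale 1 (herm_combo (1/2) x y) + op_scale \<i> (herm_combo (-\<i>/2) x y)) h = x h"
    by (simp add: scaleC_one)
qed

lemma herm_combo_in_compression_kernel:
  assumes "operator_system V" "bounded_clinear p"
    and "x \<in> compression_kernel V p" "y \<in> compression_kernel V p"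
  shows "herm_combo c x y \<in> compression_kernel V p"
proof -
  have "herm_combo c x y = op_scale c x + op_scale (cnj c) y"
    by (simp add: fun_eq_iff herm_combo_def op_scale_def)
  then show ?thesis
    using assms by (simp add: compression_kernel_add compression_kernel_scale)
qed

lemma gspan_eq_if_cartesian:
  assumes scale_add: "\<And>c d u. sc (c + d) u = sc c u + sc d u"
    and "S \<subseteq> T" and zero: "0 \<in> T" and add: "\<And>x y. x \<in> T \<Longrightarrow> y \<in> T \<Longrightarrow> x + y \<in> T"
    and scale: "\<And>c x. x \<in> T \<Longrightarrow> sc c x \<in> T"
    and cartesian: "\<And>x. x \<in> T \<Longrightarrow> \<exists>a\<in>S. \<exists>b\<in>S. x = sc 1 a + sc \<i> b"
  shows "gspan sc S = T"
proof
  show "gspan sc S \<subseteq> T"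
  proof
    fix y assume "y \<in> gspan sc S"
    then obtain F c where F: "finite F" "F \<subseteq> S" and y: "y = (\<Sum>x\<in>F. sc (c x) x)"
      unfolding gspan_def by blast
    have "(\<Sum>x\<in>F. sc (c x) x) \<in> T"
      using F by (induction F rule: finite_induct) (use \<open>S \<subseteq> T\<close> zero add scale in auto)
    then show "y \<in> T" using y by simp
  qed
  show "T \<subseteq> gspan sc S"
  proof
    fix x assume "x \<in> T"
    then obtain a b where "a \<in> S" "b \<in> S" and x: "x = sc 1 a + sc \<i> b"
      using cartesian by blast
    show "x \<in> gspan sc S"
    proof (cases "a = b")
      case True
      show ?thesis unfolding gspan_def
        by (rule CollectI, rule exI[of _ "{a}"], rule exI[of _ "\<lambda>_. 1 + \<i>"])
           (use x True \<open>a \<in> S\<close> in \<open>simp add: scale_add\<close>)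
    next
      case False
      show ?thesis unfolding gspan_def
        by (rule CollectI, rule exI[of _ "{a, b}"], rule exI[of _ "\<lambda>z. if z = a then 1 else \<i>"])
           (use x False \<open>a \<in> S\<close> \<open>b \<in> S\<close> in simp)
    qed
  qed
qed

lemma Jp_eq_compression_kernel:
  fixes V :: "('h::chilbert_space \<Rightarrow> 'h) set"
  assumes V: "operator_system V" and p: "bounded_clinear p" and "selfadjoint p"
  shows "Jp V p = compression_kernel V p"
  unfolding Jp_def Cp_Int_uminus_Cp[OF V p]
proof (rule gspan_eq_if_cartesian)
  show "op_scale (c + d) u = op_scale c u + op_scale d u" for c d and u :: "'h \<Rightarrow> 'h"
    by (simp add: fun_eq_iff op_scale_def scaleC_add_left)
  show "0 \<in> compression_kernel V p" using V p by (rule compression_kernel_zero)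
  show "x + y \<in> compression_kernel V p"
    if "x \<in> compression_kernel V p" "y \<in> compression_kernel V p" for x y
    using V p that by (rule compression_kernel_add)
  show "op_scale c x \<in> compression_kernel V p" if "x \<in> compression_kernel V p" for c x
    using V p that by (rule compression_kernel_scale)
  fix x assume x: "x \<in> compression_kernel V p"
  then obtain y where "y \<in> V" and xy: "is_adjoint x y"
    using V unfolding compression_kernel_def operator_system_def by blast
  from \<open>selfadjoint p\<close> x this have y: "y \<in> compression_kernel V p" by (rule compression_kernel_adjoint)
  have "selfadjoint (herm_combo c x y)" for c
    unfolding selfadjoint_def using is_adjoint_herm_combo[OF xy is_adjoint_sym[OF xy]] .
  moreover have "herm_combo c x y \<in> compression_kernel V p" for c
    using V p x y by (rule herm_combo_in_compression_kernel)
  ultimately show "\<exists>a\<in>{x \<in> compression_kernel V p. selfadjoint x}.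
      \<exists>b\<in>{x \<in> compression_kernel V p. selfadjoint x}. x = op_scale 1 a + op_scale \<i> b"
    using herm_combo_cartesian[of x y, symmetric] by blast
qed blast

lemma mat_scale_apply: "mat_scale c X i j = op_scale c (X i j)"
  by (simp add: mat_scale_def op_scale_def)

lemma Jpn_eq_Mn_compression_kernel:
  assumes V: "operator_system V" and p: "bounded_clinear p" and "selfadjoint p"
  shows "Jpn V p = (Mn (compression_kernel V p) :: ('n::finite \<Rightarrow> 'n \<Rightarrow> 'h::chilbert_space \<Rightarrow> 'h) set)"
  unfolding Jpn_def Cpn_Int_uminus_Cpn[OF V p]
proof (rule gspan_eq_if_cartesian)
  let ?K = "compression_kernel V p"
  show "mat_scale (c + d) U = mat_scale c U + mat_scale d U" for c d and U :: "'n \<Rightarrow> 'n \<Rightarrow> 'h \<Rightarrow> 'h"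
    by (simp add: fun_eq_iff mat_scale_def scaleC_add_left)
  show "0 \<in> Mn ?K" using compression_kernel_zero[OF V p] by (simp add: Mn_def)
  show "X + Y \<in> Mn ?K" if "X \<in> Mn ?K" "Y \<in> Mn ?K" for X Y :: "'n \<Rightarrow> 'n \<Rightarrow> 'h \<Rightarrow> 'h"
    using that compression_kernel_add[OF V p] by (simp add: Mn_def)
  show "mat_scale c X \<in> Mn ?K" if "X \<in> Mn ?K" for c and X :: "'n \<Rightarrow> 'n \<Rightarrow> 'h \<Rightarrow> 'h"
    using that compression_kernel_scale[OF V p] by (simp add: Mn_def mat_scale_apply)
  fix X :: "'n \<Rightarrow> 'n \<Rightarrow> 'h \<Rightarrow> 'h"
  assume X: "X \<in> Mn ?K"
  define Y where "Y i j = (SOME y. y \<in> V \<and> is_adjoint (X i j) y)" for i j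
  have "\<exists>y. y \<in> V \<and> is_adjoint (X i j) y" for i j
    using X V unfolding Mn_def compression_kernel_def operator_system_def by blast
  then have "Y i j \<in> V \<and> is_adjoint (X i j) (Y i j)" for i j
    unfolding Y_def by (rule someI_ex)
  then have Y: "Y i j \<in> V" and XY: "is_adjoint (X i j) (Y i j)" for i j
    by simp_all
  have YK: "Y i j \<in> ?K" for i j
    using \<open>selfadjoint p\<close> X Y XY unfolding Mn_def by (blast intro: compression_kernel_adjoint)
  define H where "H c = (\<lambda>i j. herm_combo c (X i j) (Y j i))" for c
  have "selfadjoint_mat (H c)" for c
    unfolding selfadjoint_mat_def H_def
    using is_adjoint_herm_combo[OF XY is_adjoint_sym[OF XY]] by blast
  moreover have "H c \<in> Mn ?K" for c
    using X YK herm_combo_in_compression_kernel[OF V p] unfolding H_def Mn_def by blast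
  moreover have "X = mat_scale 1 (H (1/2)) + mat_scale \<i> (H (-\<i>/2))"
  proof (rule ext, rule ext)
    show "X i j = (mat_scale 1 (H (1/2)) + mat_scale \<i> (H (-\<i>/2))) i j" for i j
      by (simp only: plus_fun_apply mat_scale_apply H_def herm_combo_cartesian)
  qed
  ultimately show "\<exists>A\<in>{X \<in> Mn ?K. selfadjoint_mat X}.
      \<exists>B\<in>{X \<in> Mn ?K. selfadjoint_mat X}. X = mat_scale 1 A + mat_scale \<i> B"
    by blast
qed blast

theorem lemma3p4:
  fixes V :: "('h::chilbert_space \<Rightarrow> 'h) set" and p :: "'h \<Rightarrow> 'h"
  assumes "operator_system V" and "p \<in> V" and "projection p"
  shows "(Mn (Jp V p) :: ('n::finite \<Rightarrow> 'n \<Rightarrow> 'h \<Rightarrow> 'h) set) = Jpn V p"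
proof -
  have p: "bounded_clinear p" and "selfadjoint p"
    using \<open>projection p\<close> unfolding projection_def BH_def by auto
  show ?thesis
    by (simp add: Jp_eq_compression_kernel[OF \<open>operator_system V\<close> p \<open>selfadjoint p\<close>]
        Jpn_eq_Mn_compression_kernel[OF \<open>operator_system V\<close> p \<open>selfadjoint p\<close>])
qed

end
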